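(* Let $G$ be a $\tau$-regular graph with node set $V=S\cup T$ ($S,T$ nonempty, disjoint) and node features $X\in\mathbb{R}^{|V|\times d}$ with nonnegative entries. Consider the two-patch PatchGT computation: a node-level GNN $f^{\mathrm{GNN}}$ of $L$ layers $H_{l+1}=\sigma(H_lW_{1l}^\top+AH_lW_{2l}^\top)$ ($\sigma$ = ReLU, $\|W_{1l}\|_{1\to1},\|W_{2l}\|_{1\to1}\le1$), patch representations $z_S=\frac{1}{|V|}\sum_{i\in S}f_i^{\mathrm{GNN}}(X)$, $z_T=\frac{1}{|V|}\sum_{i\in T}f_i^{\mathrm{GNN}}(X)$, and a patch-level layer $g_T^{\mathrm{GNN}}(X)=\sigma(z_TW_1^\top+z_SW_2^\top)$ with $W_1,W_2\in\mathbb{R}^{d\times d}$. Define $\eta_{S\to T}=\max_{\alpha}\|g_T^{\mathrm{GNN}}(X+\alpha)-g_T^{\mathrm{GNN}}(X)\|_1$ over all $\alpha$ with $|\alpha_{ij}|\le\epsilon$ for $i\in S$ and $\alpha_{ij}=0$ for $i\in T$, and $\eta_{T\to T}=\max_{\beta}\|g_T^{\mathrm{GNN}}(X+\beta)-g_T^{\mathrm{GNN}}(X)\|_1$ over all $\beta$ with $|\beta_{ij}|\le\epsilon$ for $i\in T$ and $\beta_{ij}=0$ for $i\in S$ (with $\epsilon>0$). Then for every $\delta>0$ there exist parameters $(W_{1l},W_{2l})_l$, $W_1$, $W_2$ such that $\big|\eta_{S\to T}/\eta_{T\to T}-1\big|<\delta$; i.e. the ratio $\eta_{S\to T}/\eta_{T\to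 T}$ can be made arbitrarily close to $1$.
   Context: $f_i^{\mathrm{GNN}}(X)\in\mathbb{R}^{1\times d}$ denotes the row of the final layer output $H_L$ at node $i$, computed from input features $X$. For $W\in\mathbb{R}^{d\times d}$, $\|W\|_{1\to1}=\max_k\sum_j|W_{jk}|$. For a row vector $y$, $\|y\|_1=\sum_j|y_j|$. *)

theory Defs
  imports Complex_Main
begin

text \<open>Nodes form a finite type 'v (so V = UNIV); feature
  coordinates form a finite type 'k (so d = CARD('k) \<ge> 1).
  A feature matrix H \<in> R^{|V| x d} is a function H :: 'v \<Rightarrow> 'k \<Rightarrow> real (H i j = H_ij);
  a weight matrix W \<in> R^{d x d} is W :: 'k \<Rightarrow> 'k \<Rightarrow> real (W j k = W_jk).\<close>

definition relu :: "real \<Rightarrow> real" where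
  "relu x = max 0 x"

definition adj :: "('v \<Rightarrow> 'v \<Rightarrow> bool) \<Rightarrow> 'v \<Rightarrow> 'v \<Rightarrow> real" where
  "adj E i m = (if E i m then 1 else 0)"

definition norm11 :: "('k::finite \<Rightarrow> 'k \<Rightarrow> real) \<Rightarrow> real" where
  "norm11 W = Max (range (\<lambda>k. \<Sum>j\<in>UNIV. \<bar>W j k\<bar>))"

definition gnn_layer ::
  "('v::finite \<Rightarrow> 'v \<Rightarrow> bool) \<Rightarrow> ('k::finite \<Rightarrow> 'k \<Rightarrow> real) \<Rightarrow> ('k \<Rightarrow> 'k \<Rightarrow> real)
    \<Rightarrow> ('v \<Rightarrow> 'k \<Rightarrow> real) \<Rightarrow> ('v \<Rightarrow> 'k \<Rightarrow> real)" where
  "gnn_layer E W1 W2 H i k =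
     relu ((\<Sum>j\<in>UNIV. H i j * W1 k j) + (\<Sum>m\<in>UNIV. adj E i m * (\<Sum>j\<in>UNIV. H m j * W2 k j)))"

fun gnn ::
  "('v::finite \<Rightarrow> 'v \<Rightarrow> bool) \<Rightarrow> (('k::finite \<Rightarrow> 'k \<Rightarrow> real) \<times> ('k \<Rightarrow> 'k \<Rightarrow> real)) list
    \<Rightarrow> ('v \<Rightarrow> 'k \<Rightarrow> real) \<Rightarrow> ('v \<Rightarrow> 'k \<Rightarrow> real)" where
  "gnn E [] H = H"
| "gnn E (w # ws) H = gnn E ws (gnn_layer E (fst w) (snd w) H)"

definition patch_rep ::
  "('v::finite \<Rightarrow> 'v \<Rightarrow> bool) \<Rightarrow> (('k::finite \<Rightarrow> 'k \<Rightarrow> real) \<times> ('k \<Rightarrow> 'k \<Rightarrow> real)) list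
    \<Rightarrow> ('v \<Rightarrow> 'k \<Rightarrow> real) \<Rightarrow> 'v set \<Rightarrow> 'k \<Rightarrow> real" where
  "patch_rep E Ws X P k = (1 / real (card (UNIV :: 'v set))) * (\<Sum>i\<in>P. gnn E Ws X i k)"

definition gT ::
  "('v::finite \<Rightarrow> 'v \<Rightarrow> bool) \<Rightarrow> (('k::finite \<Rightarrow> 'k \<Rightarrow> real) \<times> ('k \<Rightarrow> 'k \<Rightarrow> real)) list
    \<Rightarrow> ('k \<Rightarrow> 'k \<Rightarrow> real) \<Rightarrow> ('k \<Rightarrow> 'k \<Rightarrow> real) \<Rightarrow> 'v set \<Rightarrow> 'v set
    \<Rightarrow> ('v \<Rightarrow> 'k \<Rightarrow> real) \<Rightarrow> 'k \<Rightarrow> real" where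
  "gT E Ws W1 W2 S T X k =
     relu ((\<Sum>j\<in>UNIV. patch_rep E Ws X T j * W1 k j) + (\<Sum>j\<in>UNIV. patch_rep E Ws X S j * W2 k j))"

definition l1norm :: "('k::finite \<Rightarrow> real) \<Rightarrow> real" where
  "l1norm y = (\<Sum>k\<in>UNIV. \<bar>y k\<bar>)"

definition perturbations :: "real \<Rightarrow> 'v set \<Rightarrow> ('v \<Rightarrow> 'k \<Rightarrow> real) set" where
  "perturbations eps P = {\<alpha>. (\<forall>i j. i \<in> P \<longrightarrow> \<bar>\<alpha> i j\<bar> \<le> eps) \<and> (\<forall>i j. i \<notin> P \<longrightarrow> \<alpha> i j = 0)}"

text \<open>eta_{P->T}: maximal l1 change of g_T under perturbations supported on P
  (the maximum is attained; we write it as a supremum).\<close>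
definition eta ::
  "('v::finite \<Rightarrow> 'v \<Rightarrow> bool) \<Rightarrow> (('k::finite \<Rightarrow> 'k \<Rightarrow> real) \<times> ('k \<Rightarrow> 'k \<Rightarrow> real)) list
    \<Rightarrow> ('k \<Rightarrow> 'k \<Rightarrow> real) \<Rightarrow> ('k \<Rightarrow> 'k \<Rightarrow> real) \<Rightarrow> 'v set \<Rightarrow> 'v set
    \<Rightarrow> ('v \<Rightarrow> 'k \<Rightarrow> real) \<Rightarrow> real \<Rightarrow> 'v set \<Rightarrow> real" where
  "eta E Ws W1 W2 S T X eps P =
     (SUP \<alpha>\<in>perturbations eps P.
        l1norm (\<lambda>k. gT E Ws W1 W2 S T (\<lambda>i j. X i j + \<alpha> i j) k - gT E Ws W1 W2 S T X k))"

end

theory Submission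
  imports Defs
begin

text \<open>Take every GNN layer to be the identity on node features followed by ReLU (no neighbour
  aggregation); on the nonnegative input X the network is then the identity and each output entry
  moves by at most the perturbation of the corresponding input entry. With patch weights
  W1 = |S| I and W2 = |T| I the patch layer becomes
  g_T(Y) = ReLU((|S| \<Sigma>_{i\<in>T} Y_i + |T| \<Sigma>_{i\<in>S} Y_i) / |V|), which is symmetric in S and T.
  Perturbing one patch by at most eps per entry changes each coordinate by at most
  |S| |T| eps / |V|, and the uniform perturbation eps attains this, so both sensitivities equal
  d |S| |T| eps / |V| and their ratio is exactly 1.\<close>

definition scalar_matrix :: "real \<Rightarrow> 'k \<Rightarrow> 'k \<Rightarrow> real" where
  "scalar_matrix c k j = (if k = j then c else 0)"

lemma norm11_scalar_matrix: "norm11 (scalar_matrix c :: 'k::finite \<Rightarrow> 'k \<Rightarrow> real) = \<bar>c\<bar>"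
proof -
  have "range (\<lambda>k::'k. \<Sum>j\<in>UNIV. \<bar>scalar_matrix c j k\<bar>) = {\<bar>c\<bar>}"
    by (auto simp: scalar_matrix_def if_distrib cong: if_cong)
  then show ?thesis unfolding norm11_def by simp
qed

lemma relu_lipschitz: "\<bar>relu a - relu b\<bar> \<le> \<bar>a - b\<bar>"
  unfolding relu_def by auto

lemma relu_nonneg_id: "x \<ge> 0 \<Longrightarrow> relu x = x"
  unfolding relu_def by simp

lemma gnn_layer_scalar_matrix_1_0:
  "gnn_layer E (scalar_matrix 1) (scalar_matrix 0) H = (\<lambda>i k. relu (H i k))"
  unfolding gnn_layer_def scalar_matrix_def by (simp add: fun_eq_iff if_distrib cong: if_cong)

lemma gnn_replicate_scalar_matrix_1_0:
  "gnn E (replicate L (scalar_matrix 1, scalar_matrix 0)) H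
     = (if L = 0 then H else (\<lambda>i k. relu (H i k)))"
proof (induction L arbitrary: H)
  case 0
  then show ?case by simp
next
  case (Suc L)
  have "relu (relu x) = relu x" for x
    unfolding relu_def by simp
  with Suc.IH show ?case
    by (simp add: gnn_layer_scalar_matrix_1_0)
qed

lemma gT_scalar_matrix:
  fixes S T :: "'v::finite set"
  shows "gT E Ws (scalar_matrix a) (scalar_matrix b) S T Y k
     = relu (a / real (card (UNIV :: 'v set)) * (\<Sum>i\<in>T. gnn E Ws Y i k)
           + b / real (card (UNIV :: 'v set)) * (\<Sum>i\<in>S. gnn E Ws Y i k))"
  unfolding gT_def patch_rep_def scalar_matrix_def
  by (simp add: if_distrib mult.commute cong: if_cong)

lemma readout_change_le:
  fixes G :: "('v::finite \<Rightarrow> 'k::finite \<Rightarrow> real) \<Rightarrow> 'v \<Rightarrow> 'k \<Rightarrow> real"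
  assumes F: "\<And>Y k. F Y k = relu (cA * (\<Sum>i\<in>A. G Y i k) + cB * (\<Sum>i\<in>B. G Y i k))"
    and G_lipschitz: "\<And>Y Y' i k. \<bar>G Y i k - G Y' i k\<bar> \<le> \<bar>Y i k - Y' i k\<bar>"
    and disj: "A \<inter> B = {}" and cA: "cA \<ge> 0"
    and \<alpha>: "\<alpha> \<in> perturbations eps A"
  shows "l1norm (\<lambda>k. F (\<lambda>i j. X i j + \<alpha> i j) k - F X k)
           \<le> real (card (UNIV :: 'k set)) * (cA * real (card A) * eps)"
proof -
  let ?Y = "\<lambda>i j. X i j + \<alpha> i j"
  have G_change: "\<bar>G ?Y i k - G X i k\<bar> \<le> \<bar>\<alpha> i k\<bar>" for i k
    using G_lipschitz[where Y = ?Y and Y' = X] by simp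
  have \<alpha>_A: "\<bar>\<alpha> i k\<bar> \<le> eps" if "i \<in> A" for i k
    using \<alpha> that unfolding perturbations_def by auto
  have \<alpha>_B: "\<alpha> i k = 0" if "i \<in> B" for i k
    using \<alpha> that disj unfolding perturbations_def by auto
  have coordinate: "\<bar>F ?Y k - F X k\<bar> \<le> cA * real (card A) * eps" for k
  proof -
    have B_unchanged: "(\<Sum>i\<in>B. G ?Y i k) = (\<Sum>i\<in>B. G X i k)"
    proof (rule sum.cong)
      show "G ?Y i k = G X i k" if "i \<in> B" for i
        using G_change[of i k] \<alpha>_B[OF that] by simp
    qed simp
    have "\<bar>F ?Y k - F X k\<bar> \<le> \<bar>(cA * (\<Sum>i\<in>A. G ?Y i k) + cB * (\<Sum>i\<in>B. G X i k))
        - (cA * (\<Sum>i\<in>A. G X i k) + cB * (\<Sum>i\<in>B. G X i k))\<bar>"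
      unfolding F B_unchanged by (rule relu_lipschitz)
    also have "\<dots> = \<bar>cA * (\<Sum>i\<in>A. G ?Y i k - G X i k)\<bar>"
      by (simp add: sum_subtractf algebra_simps)
    also have "\<dots> \<le> cA * (\<Sum>i\<in>A. \<bar>G ?Y i k - G X i k\<bar>)"
      using cA by (simp add: abs_mult mult_left_mono sum_abs)
    also have "\<dots> \<le> cA * (\<Sum>i\<in>A. eps)"
      using G_change \<alpha>_A order_trans cA by (intro mult_left_mono sum_mono) blast+
    finally show ?thesis
      by (simp add: ac_simps)
  qed
  show ?thesis
    unfolding l1norm_def using sum_mono[of UNIV, OF coordinate] by simp
qed

lemma readout_change_uniform:
  fixes G :: "('v::finite \<Rightarrow> 'k::finite \<Rightarrow> real) \<Rightarrow> 'v \<Rightarrow> 'k \<Rightarrow> real"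
  assumes F: "\<And>Y k. F Y k = relu (cA * (\<Sum>i\<in>A. G Y i k) + cB * (\<Sum>i\<in>B. G Y i k))"
    and G_fixes_nonneg: "\<And>Y. (\<And>i j. Y i j \<ge> 0) \<Longrightarrow> G Y = Y"
    and disj: "A \<inter> B = {}" and cA: "cA \<ge> 0" and cB: "cB \<ge> 0"
    and X_nonneg: "\<And>i j. X i j \<ge> 0" and eps: "eps > 0"
  defines "\<alpha> \<equiv> \<lambda>i j. if i \<in> A then eps else 0"
  shows "l1norm (\<lambda>k. F (\<lambda>i j. X i j + \<alpha> i j) k - F X k)
           = real (card (UNIV :: 'k set)) * (cA * real (card A) * eps)"
proof -
  let ?Y = "\<lambda>i j. X i j + \<alpha> i j"
  have Y_nonneg: "?Y i j \<ge> 0" for i j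
    using X_nonneg[of i j] eps by (simp add: \<alpha>_def)
  have sums_nonneg: "(\<Sum>i\<in>A. X i k) \<ge> 0" "(\<Sum>i\<in>B. X i k) \<ge> 0" for k
    by (simp_all add: X_nonneg sum_nonneg)
  have sum_A: "(\<Sum>i\<in>A. ?Y i k) = (\<Sum>i\<in>A. X i k) + real (card A) * eps" for k
    by (simp add: sum.distrib \<alpha>_def)
  have sum_B: "(\<Sum>i\<in>B. ?Y i k) = (\<Sum>i\<in>B. X i k)" for k
    using disj by (intro sum.cong) (auto simp: \<alpha>_def)
  have "F ?Y k - F X k = cA * real (card A) * eps" for k
    using sums_nonneg[of k] cA cB eps
    unfolding F G_fixes_nonneg[OF Y_nonneg] G_fixes_nonneg[OF X_nonneg] sum_A sum_B
    by (simp add: relu_nonneg_id algebra_simps)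
  then show ?thesis
    unfolding l1norm_def using cA eps by simp
qed

lemma readout_sensitivity:
  fixes G :: "('v::finite \<Rightarrow> 'k::finite \<Rightarrow> real) \<Rightarrow> 'v \<Rightarrow> 'k \<Rightarrow> real"
  assumes F: "\<And>Y k. F Y k = relu (cA * (\<Sum>i\<in>A. G Y i k) + cB * (\<Sum>i\<in>B. G Y i k))"
    and G_lipschitz: "\<And>Y Y' i k. \<bar>G Y i k - G Y' i k\<bar> \<le> \<bar>Y i k - Y' i k\<bar>"
    and G_fixes_nonneg: "\<And>Y. (\<And>i j. Y i j \<ge> 0) \<Longrightarrow> G Y = Y"
    and disj: "A \<inter> B = {}" and cA: "cA \<ge> 0" and cB: "cB \<ge> 0"
    and X_nonneg: "\<And>i j. X i j \<ge> 0" and eps: "eps > 0"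
  shows "(SUP \<alpha>\<in>perturbations eps A. l1norm (\<lambda>k. F (\<lambda>i j. X i j + \<alpha> i j) k - F X k))
           = real (card (UNIV :: 'k set)) * (cA * real (card A) * eps)"
proof (rule cSup_eq_maximum)
  let ?\<alpha> = "\<lambda>i (j::'k). if i \<in> A then eps else 0"
  have "?\<alpha> \<in> perturbations eps A"
    using eps unfolding perturbations_def by auto
  then show "real (card (UNIV :: 'k set)) * (cA * real (card A) * eps)
      \<in> (\<lambda>\<alpha>. l1norm (\<lambda>k. F (\<lambda>i j. X i j + \<alpha> i j) k - F X k)) ` perturbations eps A"
    using readout_change_uniform[OF F G_fixes_nonneg disj cA cB X_nonneg eps]
    by (intro image_eqI[of _ _ ?\<alpha>]) simp_all
qed (use readout_change_le[where F = F and G = G, OF F G_lipschitz disj cA] in blast)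

theorem theorem5:
  fixes E :: "'v::finite \<Rightarrow> 'v \<Rightarrow> bool"
    and S T :: "'v set"
    and X :: "'v \<Rightarrow> 'k::finite \<Rightarrow> real"
    and \<tau> L :: nat
    and eps \<delta> :: real
  assumes sym: "\<And>i j. E i j \<Longrightarrow> E j i"
    and irrefl: "\<And>i. \<not> E i i"
    and regular: "\<And>i. card {j. E i j} = \<tau>"
    and S_ne: "S \<noteq> {}" and T_ne: "T \<noteq> {}"
    and disj: "S \<inter> T = {}" and cover: "S \<union> T = UNIV"
    and X_nonneg: "\<And>i j. X i j \<ge> 0"
    and eps_pos: "eps > 0"
    and delta_pos: "\<delta> > 0"
  shows "\<exists>Ws W1 W2. length Ws = L
           \<and> (\<forall>w\<in>set Ws. norm11 (fst w) \<le> 1 \<and> norm11 (snd w) \<le> 1)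
           \<and> \<bar>eta E Ws W1 W2 S T X eps S / eta E Ws W1 W2 S T X eps T - 1\<bar> < \<delta>"
proof -
  define Ws :: "(('k \<Rightarrow> 'k \<Rightarrow> real) \<times> ('k \<Rightarrow> 'k \<Rightarrow> real)) list"
    where "Ws = replicate L (scalar_matrix 1, scalar_matrix 0)"
  define W1 :: "'k \<Rightarrow> 'k \<Rightarrow> real" where "W1 = scalar_matrix (card S)"
  define W2 :: "'k \<Rightarrow> 'k \<Rightarrow> real" where "W2 = scalar_matrix (card T)"
  let ?F = "gT E Ws W1 W2 S T"
  let ?n = "real (card (UNIV :: 'v set))"
  have G_lipschitz: "\<bar>gnn E Ws Y i k - gnn E Ws Y' i k\<bar> \<le> \<bar>Y i k - Y' i k\<bar>" for Y Y' i k
    by (simp add: Ws_def gnn_replicate_scalar_matrix_1_0 relu_lipschitz)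
  have G_fixes_nonneg: "(\<And>i j. Y i j \<ge> 0) \<Longrightarrow> gnn E Ws Y = Y" for Y
    by (simp add: Ws_def gnn_replicate_scalar_matrix_1_0 relu_nonneg_id)
  have eta_S: "eta E Ws W1 W2 S T X eps S = real (card (UNIV :: 'k set)) * (card T / ?n * card S * eps)"
    unfolding eta_def
  proof (rule readout_sensitivity[where G = "gnn E Ws" and A = S and B = T])
    show "?F Y k = relu (card T / ?n * (\<Sum>i\<in>S. gnn E Ws Y i k) + card S / ?n * (\<Sum>i\<in>T. gnn E Ws Y i k))"
      for Y k by (simp add: W1_def W2_def gT_scalar_matrix add.commute)
  qed (use G_lipschitz G_fixes_nonneg disj X_nonneg eps_pos in auto)
  have eta_T: "eta E Ws W1 W2 S T X eps T = real (card (UNIV :: 'k set)) * (card S / ?n * card T * eps)"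
    unfolding eta_def
  proof (rule readout_sensitivity[where G = "gnn E Ws" and A = T and B = S])
    show "?F Y k = relu (card S / ?n * (\<Sum>i\<in>T. gnn E Ws Y i k) + card T / ?n * (\<Sum>i\<in>S. gnn E Ws Y i k))"
      for Y k by (simp add: W1_def W2_def gT_scalar_matrix)
  qed (use G_lipschitz G_fixes_nonneg disj X_nonneg eps_pos in auto)
  have "eta E Ws W1 W2 S T X eps S = eta E Ws W1 W2 S T X eps T"
    unfolding eta_S eta_T by (simp add: ac_simps)
  moreover have "eta E Ws W1 W2 S T X eps T > 0"
    unfolding eta_T using S_ne T_ne eps_pos by (simp add: card_gt_0_iff)
  ultimately have "eta E Ws W1 W2 S T X eps S / eta E Ws W1 W2 S T X eps T = 1"
    by simp
  then show ?thesis
    using delta_pos by (intro exI[of _ Ws] exI[of _ W1] exI[of _ W2])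
      (auto simp: Ws_def norm11_scalar_matrix)
qed

end
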